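(* Let $0<|q|<1$, let $m$ be a nonnegative integer, and let $a,b,c,d$ be complex numbers such that all denominators below are nonzero and $|cq^{-m}/(ab)|<1$. Then \[ {}_3\phi_2\!\left[\begin{matrix}a,b,dq^m\\ c,d\end{matrix};q,\frac{cq^{-m}}{ab}\right]= \frac{(c/a;q)_\infty(c/b;q)_\infty}{(c;q)_\infty(c/ab;q)_\infty}\, {}_3\phi_2\!\left[\begin{matrix}a,b,q^{-m}\\ abq/c,d\end{matrix};q,q\right]. \]
   Context: For $0<|q|<1$: $(a;q)_\infty=\prod_{j\ge0}(1-aq^j)$ and $(a;q)_k=(a;q)_\infty/(aq^k;q)_\infty$ for integers $k$. The basic hypergeometric series is ${}_r\phi_{r-1}\!\left[\begin{matrix}a_1,\dots,a_r\\ b_1,\dots,b_{r-1}\end{matrix};q,z\right]=\sum_{k\ge0}\frac{(a_1;q)_k\cdots(a_r;q)_k}{(q;q)_k(b_1;q)_k\cdots(b_{r-1};q)_k}z^k$ (it terminates if some numerator parameter equals $q^{-n}$, $n$ a nonnegative integer). *)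

theory Defs
  imports "HOL-Analysis.Analysis"
begin

definition qpoch_inf :: "complex \<Rightarrow> complex \<Rightarrow> complex" where
  "qpoch_inf a q = (\<Prod>j. (1 - a * q ^ j))"

definition qpoch :: "complex \<Rightarrow> complex \<Rightarrow> nat \<Rightarrow> complex" where
  "qpoch a q k = (\<Prod>j<k. (1 - a * q ^ j))"

definition qphi :: "complex list \<Rightarrow> complex list \<Rightarrow> complex \<Rightarrow> complex \<Rightarrow> complex" where
  "qphi as bs q z =
     (\<Sum>k. (\<Prod>a\<leftarrow>as. qpoch a q k) / (qpoch q q k * (\<Prod>b\<leftarrow>bs. qpoch b q k)) * z ^ k)"

end

theory Submission
  imports Defs
begin

text \<open>
  Expanding the ratio (d q^m;q)_n / (d;q)_n by a q-Vandermonde identity turns the left-hand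
  series into a double series whose k-th column (k = 0..m) is, after the shift n = k + l, a
  2phi1 series with parameters a q^k, b q^k, c q^k at the argument c/(a b q^k). Each column is
  evaluated by the q-Gauss summation, and the reversal identities for q-Pochhammer symbols turn
  the resulting coefficients into the terms of the terminating 3phi2 on the right.

  The q-Gauss summation itself follows from Heine's contiguous relation
  (1 - c)(1 - c/(ab)) S(c) = (1 - c/a)(1 - c/b) S(c q) for the sum S(c) of
  2phi1(a, b; c; q, c/(ab)): iterating it N times and letting N tend to infinity, where
  S(c q^N) tends to 1.
\<close>

section \<open>q-Pochhammer symbols\<close>

lemma qpoch_0 [simp]: "qpoch a q 0 = 1"
  by (simp add: qpoch_def)

lemma qpoch_Suc: "qpoch a q (Suc n) = qpoch a q n * (1 - a * q ^ n)"
  by (simp add: qpoch_def)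

lemma qpoch_add: "qpoch a q (n + k) = qpoch a q n * qpoch (a * q ^ n) q k"
  by (induction k) (simp_all add: qpoch_Suc power_add mult_ac)

lemma qpoch_Suc': "qpoch a q (Suc n) = (1 - a) * qpoch (a * q) q n"
  using qpoch_add[of a q 1 n] by (simp add: qpoch_def)

lemma qpoch_mult_q_power_nonzero:
  assumes "\<And>k. qpoch c q k \<noteq> 0"
  shows "qpoch (c * q ^ N) q n \<noteq> 0"
  using assms[of "N + n"] by (simp add: qpoch_add)

lemma qpoch_q_nonzero:
  fixes q :: complex
  assumes "norm q < 1"
  shows "qpoch q q n \<noteq> 0"
proof -
  have "norm (q * q ^ j) < 1" for j
    using assms power_less_one_iff[of "norm q" "Suc j"] by (simp add: norm_mult norm_power)
  then have "1 - q * q ^ j \<noteq> 0" for j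
    by (metis norm_one order_less_irrefl right_minus_eq)
  then show ?thesis
    unfolding qpoch_def by simp
qed

lemma norm_qpoch_le:
  fixes q :: complex
  assumes "norm q < 1"
  shows "norm (qpoch a q n) \<le> exp (norm a / (1 - norm q))"
proof -
  have geometric: "(\<lambda>j. norm a * norm q ^ j) sums (norm a / (1 - norm q))"
    using sums_mult[OF geometric_sums, of "norm q" "norm a"] assms by simp
  have "norm (qpoch a q n) \<le> (\<Prod>j<n. norm (1 - a * q ^ j))"
    unfolding qpoch_def by (rule norm_prod_le)
  also have "\<dots> \<le> (\<Prod>j<n. exp (norm a * norm q ^ j))"
  proof (rule prod_mono)
    fix j
    have "norm (1 - a * q ^ j) \<le> 1 + norm a * norm q ^ j"
      by (metis norm_one norm_power norm_mult norm_triangle_ineq4)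
    also have "\<dots> \<le> exp (norm a * norm q ^ j)"
      by (simp add: add.commute)
    finally show "0 \<le> norm (1 - a * q ^ j) \<and> norm (1 - a * q ^ j) \<le> exp (norm a * norm q ^ j)"
      by simp
  qed
  also have "\<dots> = exp (\<Sum>j<n. norm a * norm q ^ j)"
    by (simp add: exp_sum)
  also have "\<dots> \<le> exp (norm a / (1 - norm q))"
    using sum_le_suminf[OF sums_summable[OF geometric], of "{..<n}"] sums_unique[OF geometric]
    by simp
  finally show ?thesis .
qed

lemma convergent_prod_qpoch:
  fixes q :: complex
  assumes "norm q < 1"
  shows "convergent_prod (\<lambda>j. 1 - a * q ^ j)"
proof -
  have "summable (\<lambda>j. norm a * norm q ^ j)"
    using assms by (intro summable_mult summable_geometric) simp
  then show ?thesis
    by (intro abs_convergent_prod_imp_convergent_prod summable_imp_abs_convergent_prod)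
       (simp add: norm_mult norm_power)
qed

lemma LIMSEQ_qpoch:
  fixes q :: complex
  assumes "norm q < 1"
  shows "(\<lambda>n. qpoch a q n) \<longlonglongrightarrow> qpoch_inf a q"
proof -
  have "(\<lambda>n. \<Prod>j\<le>n. 1 - a * q ^ j) \<longlonglongrightarrow> qpoch_inf a q"
    using convergent_prod_LIMSEQ[OF convergent_prod_qpoch[OF assms]] by (simp add: qpoch_inf_def)
  then show ?thesis
    unfolding qpoch_def lessThan_Suc_atMost[symmetric] by (rule LIMSEQ_imp_Suc)
qed

lemma qpoch_inf_nonzero:
  fixes q :: complex
  assumes "norm q < 1" and "\<And>n. qpoch a q n \<noteq> 0"
  shows "qpoch_inf a q \<noteq> 0"
proof -
  have "1 - a * q ^ j \<noteq> 0" for j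
    using assms(2)[of "Suc j"] by (simp add: qpoch_Suc)
  then show ?thesis
    unfolding qpoch_inf_def by (rule prodinf_nonzero[OF convergent_prod_qpoch[OF assms(1)]])
qed

lemma qpoch_inf_split:
  fixes q :: complex
  assumes "norm q < 1"
  shows "qpoch_inf a q = qpoch a q k * qpoch_inf (a * q ^ k) q"
proof (rule LIMSEQ_unique)
  show "(\<lambda>n. qpoch a q (k + n)) \<longlonglongrightarrow> qpoch_inf a q"
    using LIMSEQ_ignore_initial_segment[OF LIMSEQ_qpoch[OF assms], where k=k]
    by (simp add: add.commute)
  show "(\<lambda>n. qpoch a q (k + n)) \<longlonglongrightarrow> qpoch a q k * qpoch_inf (a * q ^ k) q"
    unfolding qpoch_add by (intro tendsto_mult tendsto_const LIMSEQ_qpoch[OF assms])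
qed

lemma qpoch_bounded_below:
  fixes q :: complex
  assumes "norm q < 1" and nonzero: "\<And>n. qpoch a q n \<noteq> 0"
  obtains \<delta> where "\<delta> > 0" "\<And>n. \<delta> \<le> norm (qpoch a q n)"
proof -
  have "(\<lambda>n. inverse (qpoch a q n)) \<longlonglongrightarrow> inverse (qpoch_inf a q)"
    using assms by (intro tendsto_inverse LIMSEQ_qpoch qpoch_inf_nonzero)
  then obtain K where "K > 0" and K: "\<And>n. norm (inverse (qpoch a q n)) \<le> K"
    by (metis BseqE convergentI convergent_imp_Bseq)
  have "inverse K \<le> norm (qpoch a q n)" for n
    using K[of n] nonzero[of n] \<open>K > 0\<close> by (simp add: norm_inverse inverse_le_imp_le)
  with \<open>K > 0\<close> show thesis
    by (intro that[of "inverse K"]) auto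
qed

section \<open>The q-Gauss summation\<close>

definition gauss_term :: "complex \<Rightarrow> complex \<Rightarrow> complex \<Rightarrow> complex \<Rightarrow> nat \<Rightarrow> complex" where
  "gauss_term a b c q n = qpoch a q n * qpoch b q n / (qpoch q q n * qpoch c q n)
      * (c / (a * b)) ^ n"

lemma gauss_term_0 [simp]: "gauss_term a b c q 0 = 1"
  by (simp add: gauss_term_def)

lemma gauss_term_Suc:
  "gauss_term a b c q (Suc n) =
     gauss_term a b c q n * (1 - a * q ^ n) * (1 - b * q ^ n) * c
         / ((1 - q * q ^ n) * (1 - c * q ^ n) * (a * b))"
  by (simp add: gauss_term_def qpoch_Suc divide_inverse mult_ac)

lemma gauss_term_mult_q:
  assumes "c \<noteq> 1"
  shows "gauss_term a b (c * q) q n = gauss_term a b c q n * (1 - c) * q ^ n / (1 - c * q ^ n)"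
proof -
  have "qpoch (c * q) q n = qpoch c q n * (1 - c * q ^ n) / (1 - c)"
    using qpoch_Suc[of c q n] qpoch_Suc'[of c q n] assms by (simp add: field_simps)
  then show ?thesis
    using assms
    by (simp add: gauss_term_def divide_inverse power_mult_distrib mult_ac)
qed

lemma gauss_term_contiguous:
  assumes "a \<noteq> 0" "b \<noteq> 0" "c \<noteq> 1" "c * q ^ n \<noteq> 1" "q * q ^ n \<noteq> 1"
  shows "(1 - c) * (1 - c / (a * b)) * gauss_term a b c q n
         - (1 - c / a) * (1 - c / b) * gauss_term a b (c * q) q n
       = (1 - c) * (1 - q ^ n) * gauss_term a b c q n
         - (1 - c) * (1 - q ^ Suc n) * gauss_term a b c q (Suc n)"
proof -
  define t where "t = gauss_term a b c q n"
  define x where "x = q ^ n"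
  have cx: "1 - c * x \<noteq> 0" and qx: "1 - q * x \<noteq> 0"
    using assms(4,5) by (auto simp: x_def)
  have "(1 - c) * (1 - c / (a * b)) * t - (1 - c / a) * (1 - c / b)
      * (t * (1 - c) * x / (1 - c * x))
     = (1 - c) * (1 - x) * t
       - (1 - c) * (t * (1 - a * x) * (1 - b * x) * c / ((1 - c * x) * (a * b)))"
    using assms(1,2) cx by (simp add: field_simps)
  also have "t * (1 - a * x) * (1 - b * x) * c / ((1 - c * x) * (a * b))
      = (1 - q * x) * (t * (1 - a * x) * (1 - b * x) * c / ((1 - q * x) * (1 - c * x) * (a * b)))"
    using qx by simp
  finally show ?thesis
    unfolding gauss_term_Suc gauss_term_mult_q[OF assms(3)] power_Suc t_def x_def
    by (simp only: mult.assoc)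
qed

lemma gauss_term_bound:
  fixes q :: complex
  assumes q: "norm q < 1" and c: "\<And>k. qpoch c q k \<noteq> 0"
  obtains K where "K \<ge> 0"
    "\<And>N n. norm (gauss_term a b (c * q ^ N) q n) \<le> K * norm (c / (a * b)) ^ n * norm q ^ (N * n)"
proof -
  obtain \<delta>c where "\<delta>c > 0" and \<delta>c: "\<And>n. \<delta>c \<le> norm (qpoch c q n)"
    using qpoch_bounded_below[OF q c] by blast
  obtain \<delta>q where "\<delta>q > 0" and \<delta>q: "\<And>n. \<delta>q \<le> norm (qpoch q q n)"
    using qpoch_bounded_below[OF q qpoch_q_nonzero[OF q]] by blast
  define P where "P x = exp (norm x / (1 - norm q))" for x :: complex
  have P_pos: "P x > 0" for x
    by (simp add: P_def)
  have P: "norm (qpoch x q n) \<le> P x" for x n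
    unfolding P_def by (rule norm_qpoch_le[OF q])
  define K where "K = P a * P b / (\<delta>q * (\<delta>c / P c))"
  have "\<delta>c / P c \<le> norm (qpoch (c * q ^ N) q n)" for N n
  proof -
    have "\<delta>c \<le> norm (qpoch c q N) * norm (qpoch (c * q ^ N) q n)"
      using \<delta>c[of "N + n"] by (simp add: qpoch_add norm_mult)
    also have "\<dots> \<le> P c * norm (qpoch (c * q ^ N) q n)"
      by (intro mult_right_mono P) simp
    finally show ?thesis
      using P_pos[of c] by (simp add: divide_le_eq mult.commute)
  qed
  then have "norm (gauss_term a b (c * q ^ N) q n)
      \<le> K * (norm (c / (a * b)) ^ n * norm q ^ (N * n))" for N n
    unfolding K_def gauss_term_def norm_mult norm_divide norm_power
    using \<open>\<delta>c > 0\<close> \<open>\<delta>q > 0\<close> P_pos[of a] P_pos[of b] P_pos[of c]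
    by (intro mult_right_mono frac_le mult_mono P \<delta>q)
       (auto simp: power_divide power_mult_distrib power_mult mult_ac)
  moreover have "K \<ge> 0"
    using \<open>\<delta>c > 0\<close> \<open>\<delta>q > 0\<close> P_pos by (simp add: K_def less_imp_le)
  ultimately show thesis
    by (intro that[of K]) (auto simp: mult.assoc)
qed

lemma summable_gauss_term:
  fixes q :: complex
  assumes "norm q < 1" "\<And>k. qpoch c q k \<noteq> 0" "norm (c / (a * b)) < 1"
  shows "summable (gauss_term a b c q)"
proof -
  obtain K where K:
    "\<And>N n. norm (gauss_term a b (c * q ^ N) q n) \<le> K * norm (c / (a * b)) ^ n * norm q ^ (N * n)"
    using gauss_term_bound[OF assms(1,2)] by blast
  have "norm (gauss_term a b c q n) \<le> K * norm (c / (a * b)) ^ n" for n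
    using K[of 0 n] by simp
  moreover have "summable (\<lambda>n. K * norm (c / (a * b)) ^ n)"
    using assms(3) by (intro summable_mult summable_geometric) simp
  ultimately show ?thesis
    by (rule summable_comparison_test'[rotated])
qed

lemma summable_gauss_term_shift:
  fixes q :: complex
  assumes q: "norm q < 1" and c: "\<And>k. qpoch c q k \<noteq> 0" and r: "norm (c / (a * b)) < 1"
  shows "summable (gauss_term a b (c * q ^ N) q)"
proof (rule summable_gauss_term[OF q qpoch_mult_q_power_nonzero[OF c]])
  have "norm (c * q ^ N / (a * b)) = norm (c / (a * b)) * norm q ^ N"
    by (simp add: norm_mult norm_divide norm_power)
  also have "\<dots> \<le> norm (c / (a * b))"
    using q by (intro mult_left_le power_le_one) auto
  finally show "norm (c * q ^ N / (a * b)) < 1"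
    using r by simp
qed

lemma gauss_sum_shift_tendsto_1:
  fixes q :: complex
  assumes q: "norm q < 1" and c: "\<And>k. qpoch c q k \<noteq> 0" and r: "norm (c / (a * b)) < 1"
  shows "(\<lambda>N. suminf (gauss_term a b (c * q ^ N) q)) \<longlonglongrightarrow> 1"
proof -
  obtain K where "K \<ge> 0" and K:
    "\<And>N n. norm (gauss_term a b (c * q ^ N) q n) \<le> K * norm (c / (a * b)) ^ n * norm q ^ (N * n)"
    using gauss_term_bound[OF q c] by blast
  define r where "r = norm (c / (a * b))"
  have "r \<ge> 0" "r < 1"
    using r by (auto simp: r_def)
  have tail: "norm (suminf (gauss_term a b (c * q ^ N) q) - 1) \<le> K * r / (1 - r) * norm q ^ N" for N
  proof -
    have "suminf (gauss_term a b (c * q ^ N) q) - 1 = (\<Sum>n. gauss_term a b (c * q ^ N) q (Suc n))"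
      using summable_gauss_term_shift[OF q c r] by (simp add: suminf_split_head)
    also have "norm \<dots> \<le> (\<Sum>n. K * r * norm q ^ N * r ^ n)"
    proof (rule norm_suminf_le)
      show "norm (gauss_term a b (c * q ^ N) q (Suc n)) \<le> K * r * norm q ^ N * r ^ n" for n
      proof -
        have "norm q ^ (N * Suc n) \<le> norm q ^ N"
          using q by (intro power_decreasing) auto
        then show ?thesis
          using K[of N "Suc n"] \<open>K \<ge> 0\<close> \<open>r \<ge> 0\<close>
              mult_left_mono[of "norm q ^ (N * Suc n)" "norm q ^ N" "K * r ^ Suc n"]
          by (simp add: r_def mult_ac)
      qed
      show "summable (\<lambda>n. K * r * norm q ^ N * r ^ n)"
        using \<open>r \<ge> 0\<close> \<open>r < 1\<close> by (intro summable_mult summable_geometric) auto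
    qed
    also have "\<dots> = K * r / (1 - r) * norm q ^ N"
      using \<open>r \<ge> 0\<close> \<open>r < 1\<close> by (simp add: suminf_mult suminf_geometric divide_inverse)
    finally show ?thesis .
  qed
  have "(\<lambda>N. K * r / (1 - r) * norm q ^ N) \<longlonglongrightarrow> 0"
    using q by (intro tendsto_mult_right_zero LIMSEQ_power_zero) auto
  then have "(\<lambda>N. suminf (gauss_term a b (c * q ^ N) q) - 1) \<longlonglongrightarrow> 0"
    by (rule Lim_null_comparison[OF always_eventually[OF allI[OF tail]]])
  then show ?thesis
    by (simp add: LIM_zero_iff)
qed

lemma gauss_sum_contiguous:
  fixes q :: complex
  assumes q: "norm q < 1" and "a \<noteq> 0" "b \<noteq> 0" and c: "\<And>k. qpoch c q k \<noteq> 0"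
    and summable: "summable (gauss_term a b c q)" "summable (gauss_term a b (c * q) q)"
  shows "(1 - c) * (1 - c / (a * b)) * suminf (gauss_term a b c q)
       = (1 - c / a) * (1 - c / b) * suminf (gauss_term a b (c * q) q)"
proof -
  define u where "u n = (1 - c) * (1 - q ^ n) * gauss_term a b c q n" for n
  have "c \<noteq> 1" "c * q ^ n \<noteq> 1" for n
    using c[of 1] c[of "Suc n"] by (auto simp: qpoch_Suc)
  moreover have "q * q ^ n \<noteq> 1" for n
    using qpoch_q_nonzero[OF q, of "Suc n"] by (auto simp: qpoch_Suc)
  ultimately have telescoping: "(1 - c) * (1 - c / (a * b)) * gauss_term a b c q n
      - (1 - c / a) * (1 - c / b) * gauss_term a b (c * q) q n = u n - u (Suc n)" for n
    unfolding u_def by (intro gauss_term_contiguous assms(2,3))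
  have "u \<longlonglongrightarrow> (1 - c) * (1 - 0) * 0"
    unfolding u_def using q
    by (intro tendsto_mult tendsto_const tendsto_diff LIMSEQ_power_zero
        summable_LIMSEQ_zero[OF summable(1)]) auto
  then have "(\<lambda>n. u n - u (Suc n)) sums 0"
    using telescope_sums'[of u 0] by (simp add: u_def)
  moreover have "(\<lambda>n. u n - u (Suc n)) sums
      ((1 - c) * (1 - c / (a * b)) * suminf (gauss_term a b c q)
       - (1 - c / a) * (1 - c / b) * suminf (gauss_term a b (c * q) q))"
    unfolding telescoping[symmetric] using summable by (intro sums_diff sums_mult summable_sums)
  ultimately show ?thesis
    using sums_unique2 by fastforce
qed

lemma qphi_gauss_term: "qphi [a, b] [c] q (c / (a * b)) = suminf (gauss_term a b c q)"
  by (simp add: qphi_def gauss_term_def[abs_def] mult_ac)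

theorem q_gauss_sum:
  fixes q :: complex
  assumes q: "norm q < 1" and ab: "a \<noteq> 0" "b \<noteq> 0" and c: "\<And>k. qpoch c q k \<noteq> 0"
    and r: "norm (c / (a * b)) < 1"
  shows "qpoch_inf c q * qpoch_inf (c / (a * b)) q * qphi [a, b] [c] q (c / (a * b))
       = qpoch_inf (c / a) q * qpoch_inf (c / b) q"
proof -
  define S where "S N = suminf (gauss_term a b (c * q ^ N) q)" for N
  note summable = summable_gauss_term_shift[OF q c r]
  have step: "(1 - c * q ^ N) * (1 - c * q ^ N / (a * b)) * S N
      = (1 - c * q ^ N / a) * (1 - c * q ^ N / b) * S (Suc N)" for N
  proof -
    have shift: "c * q ^ Suc N = c * q ^ N * q"
      by (simp add: mult_ac)
    show ?thesis
      unfolding S_def shift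
      by (rule gauss_sum_contiguous[OF q ab qpoch_mult_q_power_nonzero[OF c] summable
          summable[of "Suc N", unfolded shift]])
  qed
  have iterate:
    "qpoch c q N * qpoch (c / (a * b)) q N * S 0 = qpoch (c / a) q N * qpoch (c / b) q N
        * S N" for N
  proof (induction N)
    case (Suc N)
    have "qpoch c q (Suc N) * qpoch (c / (a * b)) q (Suc N) * S 0
        = (1 - c * q ^ N) * (1 - c * q ^ N / (a * b))
            * (qpoch c q N * qpoch (c / (a * b)) q N * S 0)"
      by (simp add: qpoch_Suc mult_ac)
    also have "\<dots> = qpoch (c / a) q N * qpoch (c / b) q N
        * ((1 - c * q ^ N) * (1 - c * q ^ N / (a * b)) * S N)"
      unfolding Suc.IH by (simp add: mult_ac)
    also have "\<dots> = qpoch (c / a) q (Suc N) * qpoch (c / b) q (Suc N) * S (Suc N)"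
      unfolding step by (simp add: qpoch_Suc mult_ac)
    finally show ?case .
  qed simp
  have "(\<lambda>N. qpoch c q N * qpoch (c / (a * b)) q N * S 0)
      \<longlonglongrightarrow> qpoch_inf c q * qpoch_inf (c / (a * b)) q * S 0"
    by (intro tendsto_mult tendsto_const LIMSEQ_qpoch[OF q])
  moreover have "(\<lambda>N. qpoch (c / a) q N * qpoch (c / b) q N * S N)
      \<longlonglongrightarrow> qpoch_inf (c / a) q * qpoch_inf (c / b) q * 1"
    unfolding S_def by (intro tendsto_mult LIMSEQ_qpoch[OF q] gauss_sum_shift_tendsto_1[OF q c r])
  ultimately show ?thesis
    unfolding iterate qphi_gauss_term by (simp add: S_def LIMSEQ_unique)
qed

section \<open>A q-Vandermonde expansion\<close>

text \<open>Because of the truncated subtraction m - i, qfalling q m k vanishes for k > m.\<close>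

definition qfalling :: "complex \<Rightarrow> nat \<Rightarrow> nat \<Rightarrow> complex" where
  "qfalling q m k = (\<Prod>i<k. 1 - q ^ (m - i))"

definition qbinomial :: "complex \<Rightarrow> nat \<Rightarrow> nat \<Rightarrow> complex" where
  "qbinomial q n k = qfalling q n k / qpoch q q k"

lemma qfalling_0 [simp]: "qfalling q m 0 = 1"
  by (simp add: qfalling_def)

lemma qfalling_Suc: "qfalling q m (Suc k) = qfalling q m k * (1 - q ^ (m - k))"
  by (simp add: qfalling_def)

lemma qfalling_eq_0: "m < k \<Longrightarrow> qfalling q m k = 0"
  unfolding qfalling_def by (rule prod_zero) (auto intro: bexI[of _ m])

lemma qfalling_Suc_Suc: "qfalling q (Suc n) (Suc k) = (1 - q ^ Suc n) * qfalling q n k"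
  unfolding qfalling_def by (subst prod.lessThan_Suc_shift) simp

lemma qfalling_mult_qpoch: "qfalling q (l + k) k * qpoch q q l = qpoch q q (l + k)"
proof (induction k)
  case (Suc k)
  have "qfalling q (l + Suc k) (Suc k) * qpoch q q l
      = (1 - q ^ Suc (l + k)) * (qfalling q (l + k) k * qpoch q q l)"
    by (simp add: qfalling_Suc_Suc)
  also have "\<dots> = (1 - q ^ Suc (l + k)) * qpoch q q (l + k)"
    by (simp only: Suc.IH)
  also have "\<dots> = qpoch q q (l + Suc k)"
    by (simp add: qpoch_Suc mult_ac)
  finally show ?case .
qed simp

lemma qbinomial_0 [simp]: "qbinomial q n 0 = 1"
  by (simp add: qbinomial_def)

lemma qbinomial_eq_0: "n < k \<Longrightarrow> qbinomial q n k = 0"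
  by (simp add: qbinomial_def qfalling_eq_0)

lemma qbinomial_Suc_Suc:
  fixes q :: complex
  assumes "norm q < 1"
  shows "qbinomial q (Suc n) (Suc k) = qbinomial q n (Suc k) + q ^ (n - k) * qbinomial q n k"
proof (cases "k \<le> n")
  case True
  have "qpoch q q k \<noteq> 0" "1 - q * q ^ k \<noteq> 0"
    using qpoch_q_nonzero[OF assms, of k] qpoch_q_nonzero[OF assms, of "Suc k"]
    by (auto simp: qpoch_Suc)
  moreover have "q ^ n = q ^ (n - k) * q ^ k"
    using True by (simp add: power_add[symmetric])
  ultimately show ?thesis
    unfolding qbinomial_def qfalling_Suc_Suc
    by (simp add: qfalling_Suc qpoch_Suc field_simps)
next
  case False
  then show ?thesis
    by (simp add: qbinomial_eq_0)
qed

lemma qpoch_q_power_expand_step: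
  assumes "k \<le> n"
  shows "(1 - d * q ^ m) * (qfalling q m k * q ^ ((m - k) * (n - k))
           * qpoch (d * q * q ^ k) q (n - k))
       = qfalling q m k * q ^ ((m - k) * (Suc n - k)) * qpoch (d * q ^ k) q (Suc n - k)
         + q ^ (n - k) * (qfalling q m (Suc k) * q ^ ((m - Suc k) * (Suc n - Suc k))
             * qpoch (d * q ^ Suc k) q (Suc n - Suc k))"
proof -
  define E where "E = q ^ ((m - k) * (n - k))"
  define E' where "E' = q ^ ((m - Suc k) * (n - k))"
  define P where "P = qpoch (d * q * q ^ k) q (n - k)"
  have Suc_diff: "Suc n - k = Suc (n - k)"
    using assms by simp
  have "(1 - d * q ^ m) * (qfalling q m k * E * P)
      = qfalling q m k * (q ^ (m - k) * E) * ((1 - d * q ^ k) * P)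
        + q ^ (n - k) * (qfalling q m (Suc k) * E' * P)"
    \<comment> \<open>split 1 - d q^m = q^(m-k) (1 - d q^k) + (1 - q^(m-k))\<close>
  proof (cases "k < m")
    case True
    then have "q ^ m = q ^ (m - k) * q ^ k"
      by (simp add: power_add[symmetric])
    moreover have "E = q ^ (n - k) * E'"
      using True by (simp add: E_def E'_def power_add[symmetric] Suc_diff_Suc[symmetric])
    ultimately show ?thesis
      by (simp add: qfalling_Suc algebra_simps)
  next
    case False
    then have "qfalling q m (Suc k) = 0"
      by (simp add: qfalling_eq_0)
    moreover have "qfalling q m k = 0 \<or> k = m"
      using False by (auto simp: qfalling_eq_0)
    ultimately show ?thesis
      by auto
  qed
  moreover have "qpoch (d * q ^ k) q (Suc n - k) = (1 - d * q ^ k) * P"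
    unfolding Suc_diff qpoch_Suc' P_def by (simp add: mult_ac)
  moreover have "q ^ ((m - k) * (Suc n - k)) = q ^ (m - k) * E"
    unfolding Suc_diff E_def by (simp add: power_add)
  moreover have "qpoch (d * q ^ Suc k) q (Suc n - Suc k) = P"
    and "q ^ ((m - Suc k) * (Suc n - Suc k)) = E'"
    by (simp_all add: P_def E'_def mult_ac)
  ultimately show ?thesis
    unfolding E_def P_def by simp
qed

lemma qpoch_q_power_expand:
  fixes q :: complex
  assumes "norm q < 1"
  shows "qpoch (d * q ^ m) q n
       = (\<Sum>k\<le>n. qbinomial q n k * qfalling q m k * q ^ ((m - k) * (n - k))
           * qpoch (d * q ^ k) q (n - k))"
proof (induction n arbitrary: d)
  case (Suc n)
  define A where "A k = qfalling q m k * q ^ ((m - k) * (Suc n - k))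
      * qpoch (d * q ^ k) q (Suc n - k)" for k
  have "qpoch (d * q ^ m) q (Suc n) = (1 - d * q ^ m) * qpoch (d * q * q ^ m) q n"
    by (simp add: qpoch_Suc' mult_ac)
  also have "\<dots> = (\<Sum>k\<le>n. qbinomial q n k * ((1 - d * q ^ m)
      * (qfalling q m k * q ^ ((m - k) * (n - k)) * qpoch (d * q * q ^ k) q (n - k))))"
    unfolding Suc.IH sum_distrib_left by (simp add: mult_ac)
  also have "\<dots> = (\<Sum>k\<le>n. qbinomial q n k * A k + q ^ (n - k) * qbinomial q n k * A (Suc k))"
  proof (rule sum.cong[OF refl])
    fix k
    assume "k \<in> {..n}"
    then have step: "(1 - d * q ^ m)
        * (qfalling q m k * q ^ ((m - k) * (n - k)) * qpoch (d * q * q ^ k) q (n - k))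
        = A k + q ^ (n - k) * A (Suc k)"
      unfolding A_def by (intro qpoch_q_power_expand_step) simp
    show "qbinomial q n k
        * ((1 - d * q ^ m)
            * (qfalling q m k * q ^ ((m - k) * (n - k)) * qpoch (d * q * q ^ k) q (n - k)))
        = qbinomial q n k * A k + q ^ (n - k) * qbinomial q n k * A (Suc k)"
      unfolding step by (simp add: algebra_simps)
  qed
  also have "\<dots> = (\<Sum>k\<le>n. qbinomial q n k * A k) + (\<Sum>k\<le>n. q ^ (n - k) * qbinomial q n k * A (Suc k))"
    by (rule sum.distrib)
  also have "(\<Sum>k\<le>n. qbinomial q n k * A k) = A 0 + (\<Sum>k\<le>n. qbinomial q n (Suc k) * A (Suc k))"
    using sum.atMost_Suc_shift[of "\<lambda>k. qbinomial q n k * A k" n] by (simp add: qbinomial_eq_0)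
  also have "A 0 + (\<Sum>k\<le>n. qbinomial q n (Suc k) * A (Suc k))
      + (\<Sum>k\<le>n. q ^ (n - k) * qbinomial q n k * A (Suc k))
      = A 0 + (\<Sum>k\<le>n. qbinomial q (Suc n) (Suc k) * A (Suc k))"
    by (simp add: qbinomial_Suc_Suc[OF assms] sum.distrib distrib_right add.assoc)
  also have "\<dots> = (\<Sum>k\<le>Suc n. qbinomial q (Suc n) k * A k)"
    unfolding sum.atMost_Suc_shift by simp
  finally show ?case
    by (simp add: A_def mult.assoc)
qed simp

lemma qpoch_q_power_ratio_expand:
  fixes q :: complex
  assumes "norm q < 1" "qpoch d q n \<noteq> 0"
  shows "qpoch (d * q ^ m) q n / qpoch d q n
       = (\<Sum>k\<le>m. qbinomial q n k * qfalling q m k * q ^ ((m - k) * (n - k)) / qpoch d q k)"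
proof -
  have "qpoch (d * q ^ m) q n / qpoch d q n
      = (\<Sum>k\<le>n. qbinomial q n k * qfalling q m k * q ^ ((m - k) * (n - k)) / qpoch d q k)"
    unfolding qpoch_q_power_expand[OF assms(1), of d m n] sum_divide_distrib
  proof (rule sum.cong[OF refl])
    fix k
    assume "k \<in> {..n}"
    then have "qpoch d q n = qpoch d q k * qpoch (d * q ^ k) q (n - k)"
      using qpoch_add[of d q k "n - k"] by simp
    then show "qbinomial q n k * qfalling q m k * q ^ ((m - k) * (n - k))
        * qpoch (d * q ^ k) q (n - k) / qpoch d q n
        = qbinomial q n k * qfalling q m k * q ^ ((m - k) * (n - k)) / qpoch d q k"
      using assms(2) by simp
  qed
  also have "\<dots>
      = (\<Sum>k\<le>n + m. qbinomial q n k * qfalling q m k * q ^ ((m - k) * (n - k)) / qpoch d q k)"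
    by (rule sum.mono_neutral_left) (auto simp: qbinomial_eq_0)
  also have "\<dots> = (\<Sum>k\<le>m. qbinomial q n k * qfalling q m k * q ^ ((m - k) * (n - k)) / qpoch d q k)"
    by (rule sum.mono_neutral_right) (auto simp: qfalling_eq_0)
  finally show ?thesis .
qed

section \<open>Reversal of q-Pochhammer symbols\<close>

lemma qpoch_div_q_power_reverse:
  assumes "q \<noteq> 0" "x \<noteq> 0"
  shows "qpoch (x / q ^ k) q k * q ^ (Suc k choose 2) = (- x) ^ k * qpoch (q / x) q k"
proof (induction k)
  case (Suc k)
  have shift: "x / q ^ Suc k * q = x / q ^ k"
    using assms(1) by simp
  have "Suc (Suc k) choose 2 = (Suc k choose 2) + Suc k"
    by (simp add: numeral_2_eq_2)
  then have "qpoch (x / q ^ Suc k) q (Suc k) * q ^ (Suc (Suc k) choose 2)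
      = (q ^ Suc k - x) * (qpoch (x / q ^ k) q k * q ^ (Suc k choose 2))"
    unfolding qpoch_Suc' shift using assms(1) by (simp add: power_add field_simps)
  also have "\<dots> = (- x) ^ Suc k * qpoch (q / x) q (Suc k)"
    unfolding Suc.IH qpoch_Suc using assms by (simp add: field_simps)
  finally show ?case .
qed (simp add: numeral_2_eq_2)

lemma qpoch_inverse_q_power_eq_qfalling:
  assumes "q \<noteq> 0"
  shows "qpoch (1 / q ^ m) q k * q ^ (m * k) = (- 1) ^ k * q ^ (k choose 2) * qfalling q m k"
proof (induction k)
  case (Suc k)
  have key: "qfalling q m k * (q ^ m - q ^ k) = - (q ^ k * (qfalling q m k * (1 - q ^ (m - k))))"
  proof (cases "k \<le> m")
    case True
    then have "q ^ m = q ^ k * q ^ (m - k)"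
      by (simp add: power_add[symmetric])
    then show ?thesis
      by (simp add: algebra_simps)
  qed (simp add: qfalling_eq_0)
  have "qpoch (1 / q ^ m) q (Suc k) * q ^ (m * Suc k)
      = (qpoch (1 / q ^ m) q k * q ^ (m * k)) * (q ^ m - q ^ k)"
    using assms by (simp add: qpoch_Suc power_add field_simps)
  also have "\<dots> = (- 1) ^ k * q ^ (k choose 2) * (qfalling q m k * (q ^ m - q ^ k))"
    unfolding Suc.IH by (simp only: mult_ac)
  also have "\<dots> = (- 1) ^ Suc k * q ^ (Suc k choose 2) * qfalling q m (Suc k)"
    unfolding key by (simp add: numeral_2_eq_2 qfalling_Suc power_add mult_ac)
  finally show ?case .
qed (simp add: numeral_2_eq_2)

lemma qpoch_inverse_q_power_eq_0: "q \<noteq> 0 \<Longrightarrow> m < k \<Longrightarrow> qpoch (1 / q ^ m) q k = 0"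
  unfolding qpoch_def by (rule prod_zero) (auto intro!: bexI[of _ m])

lemma qfalling_qpoch_reflect:
  assumes "q \<noteq> 0" "w \<noteq> 0"
  shows "(w / q ^ m) ^ k * qfalling q m k * qpoch (q / w) q k
       = qpoch (1 / q ^ m) q k * q ^ k * qpoch (w / q ^ k) q k"
proof -
  have "(w / q ^ m) ^ k * q ^ (m * k) = w ^ k"
    using assms(1) by (simp add: power_divide power_mult)
  have "(- 1) ^ k * (- w) ^ k = w ^ k"
    by (simp add: power_mult_distrib[symmetric])
  have "q ^ (k choose 2) * q ^ k = q ^ (Suc k choose 2)"
    by (simp add: numeral_2_eq_2 power_add)
  have "(qpoch (1 / q ^ m) q k * q ^ k * qpoch (w / q ^ k) q k)
      * (q ^ (m * k) * q ^ (Suc k choose 2))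
      = (qpoch (1 / q ^ m) q k * q ^ (m * k)) * q ^ k
          * (qpoch (w / q ^ k) q k * q ^ (Suc k choose 2))"
    by (simp only: mult_ac)
  also have "\<dots> = ((- 1) ^ k * (- w) ^ k) * (q ^ (k choose 2) * q ^ k) * qfalling q m k
      * qpoch (q / w) q k"
    unfolding qpoch_div_q_power_reverse[OF assms] qpoch_inverse_q_power_eq_qfalling[OF assms(1)]
    by (simp only: mult_ac)
  also have "\<dots> = ((w / q ^ m) ^ k * qfalling q m k * qpoch (q / w) q k)
      * (q ^ (m * k) * q ^ (Suc k choose 2))"
    unfolding \<open>(- 1) ^ k * (- w) ^ k = w ^ k\<close> \<open>q ^ (k choose 2) * q ^ k = q ^ (Suc k choose 2)\<close>
      \<open>(w / q ^ m) ^ k * q ^ (m * k) = w ^ k\<close>[symmetric]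
    by (simp only: mult_ac)
  finally show ?thesis
    using assms(1) by simp
qed

section \<open>The transformation\<close>

lemma qphi_terminating:
  assumes "q \<noteq> 0"
  shows "qphi [a, b, 1 / q ^ m] [e, d] q z
       = (\<Sum>k\<le>m. qpoch a q k * qpoch b q k * qpoch (1 / q ^ m) q k
           / (qpoch q q k * qpoch e q k * qpoch d q k) * z ^ k)"
  unfolding qphi_def
  by (subst suminf_finite[of "{..m}"]) (auto simp: qpoch_inverse_q_power_eq_0[OF assms] mult_ac)

text \<open>The k-th column of the expanded series: up to the factor (1 - q)^k / (q;q)_k, this is the
  n-th term of the k-th Jackson q-derivative of 2phi1(a, b; c; q, z) at z = c/(a b q^k).\<close>

definition gauss_column :: "complex \<Rightarrow> complex \<Rightarrow> complex \<Rightarrow> complex \<Rightarrow> nat \<Rightarrow> nat \<Rightarrow> complex" where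
  "gauss_column a b c q k n =
     qpoch a q n * qpoch b q n / (qpoch q q n * qpoch c q n) * qbinomial q n k
         * (c / (a * b) / q ^ k) ^ (n - k)"

lemma gauss_column_shift:
  fixes q :: complex
  assumes "norm q < 1" "q \<noteq> 0"
  shows "gauss_column a b c q k (l + k)
       = qpoch a q k * qpoch b q k / (qpoch q q k * qpoch c q k)
           * gauss_term (a * q ^ k) (b * q ^ k) (c * q ^ k) q l"
proof -
  have split: "qpoch x q (l + k) = qpoch x q k * qpoch (x * q ^ k) q l" for x
    by (simp add: qpoch_add add.commute)
  have binomial: "qbinomial q (l + k) k / qpoch q q (l + k) = 1 / (qpoch q q k * qpoch q q l)"
    using qfalling_mult_qpoch[of q l k] qpoch_q_nonzero[OF assms(1)]
    by (simp add: qbinomial_def field_simps)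
  have ratio: "c / (a * b) / q ^ k = c * q ^ k / (a * q ^ k * (b * q ^ k))"
    using assms(2) by (simp add: field_simps)
  have "gauss_column a b c q k (l + k) = qpoch a q (l + k) * qpoch b q (l + k) / qpoch c q (l + k)
      * (qbinomial q (l + k) k / qpoch q q (l + k)) * (c / (a * b) / q ^ k) ^ l"
    by (simp add: gauss_column_def divide_inverse mult_ac)
  then show ?thesis
    unfolding split[of a] split[of b] split[of c] gauss_term_def binomial ratio[symmetric]
    by (simp add: divide_inverse mult_ac)
qed

lemma gauss_column_sums:
  fixes a b c q :: complex
  defines "w \<equiv> c / (a * b)"
  assumes q: "norm q < 1" "q \<noteq> 0" and ab: "a \<noteq> 0" "b \<noteq> 0" and c: "\<And>j. qpoch c q j \<noteq> 0"
    and w: "qpoch_inf w q \<noteq> 0" "qpoch (w / q ^ k) q k \<noteq> 0" "norm (w / q ^ k) < 1"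
  shows "gauss_column a b c q k sums
    (qpoch_inf (c / a) q * qpoch_inf (c / b) q / (qpoch_inf c q * qpoch_inf w q)
     * qpoch a q k * qpoch b q k / (qpoch q q k * qpoch (w / q ^ k) q k))"
proof -
  define a' b' c' where "a' = a * q ^ k" and "b' = b * q ^ k" and "c' = c * q ^ k"
  have "a' \<noteq> 0" "b' \<noteq> 0"
    using ab q(2) by (simp_all add: a'_def b'_def)
  have c': "qpoch c' q j \<noteq> 0" for j
    unfolding c'_def by (rule qpoch_mult_q_power_nonzero[OF c])
  have w': "c' / (a' * b') = w / q ^ k"
    using q(2) by (simp add: a'_def b'_def c'_def w_def field_simps)
  have "c' / a' = c / a" "c' / b' = c / b"
    using q(2) by (simp_all add: a'_def b'_def c'_def)
  then have gauss: "qpoch_inf c' q * qpoch_inf (w / q ^ k) q * suminf (gauss_term a' b' c' q)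
      = qpoch_inf (c / a) q * qpoch_inf (c / b) q"
    using q_gauss_sum[OF q(1) \<open>a' \<noteq> 0\<close> \<open>b' \<noteq> 0\<close> c', unfolded qphi_gauss_term, unfolded w'] w(3)
    by simp
  have "qpoch_inf c q = qpoch c q k * qpoch_inf c' q"
    unfolding c'_def by (rule qpoch_inf_split[OF q(1)])
  moreover have "qpoch_inf (w / q ^ k) q = qpoch (w / q ^ k) q k * qpoch_inf w q"
    using qpoch_inf_split[OF q(1), of "w / q ^ k" k] q(2) by simp
  moreover have "qpoch_inf c q \<noteq> 0"
    by (rule qpoch_inf_nonzero[OF q(1) c])
  ultimately have "suminf (gauss_term a' b' c' q)
      = qpoch_inf (c / a) q * qpoch_inf (c / b) q / (qpoch_inf c q * qpoch_inf w q)
        * qpoch c q k / qpoch (w / q ^ k) q k"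
    using gauss w(1,2) c[of k] by (simp add: field_simps)
  moreover have "(\<lambda>l. gauss_column a b c q k (l + k)) sums
      (qpoch a q k * qpoch b q k / (qpoch q q k * qpoch c q k) * suminf (gauss_term a' b' c' q))"
    unfolding gauss_column_shift[OF q] a'_def[symmetric] b'_def[symmetric] c'_def[symmetric]
    using w' w(3) by (intro sums_mult summable_sums summable_gauss_term[OF q(1) c']) simp
  moreover have "(\<Sum>n<k. gauss_column a b c q k n) = 0"
    by (simp add: gauss_column_def qbinomial_eq_0)
  ultimately show ?thesis
    using c[of k] by (simp add: sums_iff_shift field_simps)
qed

lemma phi32_term_expand:
  fixes a b c d q :: complex
  defines "w \<equiv> c / (a * b)"
  assumes "norm q < 1" "q \<noteq> 0" "qpoch d q n \<noteq> 0"
  shows "qpoch a q n * qpoch b q n * qpoch (d * q ^ m) q n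
      / (qpoch q q n * qpoch c q n * qpoch d q n) * (w / q ^ m) ^ n
       = (\<Sum>k\<le>m. (w / q ^ m) ^ k * qfalling q m k / qpoch d q k * gauss_column a b c q k n)"
proof -
  have power_shift: "(w / q ^ m) ^ n * (qbinomial q n k * q ^ ((m - k) * (n - k)))
      = (w / q ^ m) ^ k * (qbinomial q n k * (w / q ^ k) ^ (n - k))" if "k \<le> m" for k
  proof (cases "k \<le> n")
    case True
    have "w / q ^ m * q ^ (m - k) = w / q ^ k"
      using that assms(3) by (simp add: field_simps power_add[symmetric])
    then have "(w / q ^ m) ^ (n - k) * q ^ ((m - k) * (n - k)) = (w / q ^ k) ^ (n - k)"
      by (metis power_mult power_mult_distrib mult.commute)
    moreover have "(w / q ^ m) ^ n = (w / q ^ m) ^ k * (w / q ^ m) ^ (n - k)"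
      using True by (simp add: power_add[symmetric])
    ultimately show ?thesis
      by (simp add: mult_ac)
  qed (simp add: qbinomial_eq_0)
  have "(w / q ^ m) ^ n * (qbinomial q n k * qfalling q m k * q ^ ((m - k) * (n - k)) / qpoch d q k)
      = (w / q ^ m) ^ k * qfalling q m k / qpoch d q k * (qbinomial q n k * (w / q ^ k) ^ (n - k))"
    if "k \<in> {..m}" for k
  proof -
    have "(w / q ^ m) ^ n
        * (qbinomial q n k * qfalling q m k * q ^ ((m - k) * (n - k)) / qpoch d q k)
        = ((w / q ^ m) ^ n * (qbinomial q n k * q ^ ((m - k) * (n - k))))
            * (qfalling q m k / qpoch d q k)"
      by (simp add: divide_inverse mult_ac)
    also have "\<dots> = (w / q ^ m) ^ k * qfalling q m k / qpoch d q k
        * (qbinomial q n k * (w / q ^ k) ^ (n - k))"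
      unfolding power_shift[OF that[simplified]] by (simp add: divide_inverse mult_ac)
    finally show ?thesis .
  qed
  then have expand: "(w / q ^ m) ^ n * (qpoch (d * q ^ m) q n / qpoch d q n)
      = (\<Sum>k\<le>m. (w / q ^ m) ^ k * qfalling q m k / qpoch d q k
          * (qbinomial q n k * (w / q ^ k) ^ (n - k)))"
    unfolding qpoch_q_power_ratio_expand[OF assms(2,4)] sum_distrib_left by (rule sum.cong[OF refl])
  have "qpoch a q n * qpoch b q n * qpoch (d * q ^ m) q n
      / (qpoch q q n * qpoch c q n * qpoch d q n) * (w / q ^ m) ^ n
      = qpoch a q n * qpoch b q n / (qpoch q q n * qpoch c q n)
          * ((w / q ^ m) ^ n * (qpoch (d * q ^ m) q n / qpoch d q n))"
    by (simp add: divide_inverse mult_ac)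
  also have "\<dots> = (\<Sum>k\<le>m. (w / q ^ m) ^ k * qfalling q m k / qpoch d q k * gauss_column a b c q k n)"
    unfolding expand gauss_column_def w_def[symmetric] sum_distrib_left by (simp add: mult_ac)
  finally show ?thesis .
qed

lemma phi32_column_sums:
  fixes a b c d q :: complex
  defines "w \<equiv> c / (a * b)"
  assumes q: "norm q < 1" "q \<noteq> 0" and "a \<noteq> 0" "b \<noteq> 0" "c \<noteq> 0" and c: "\<And>j. qpoch c q j \<noteq> 0"
    and "qpoch_inf w q \<noteq> 0" "k \<le> m" "qpoch (a * b * q / c) q k \<noteq> 0" "norm (w / q ^ m) < 1"
  shows "(\<lambda>n. (w / q ^ m) ^ k * qfalling q m k / qpoch d q k * gauss_column a b c q k n) sums
    (qpoch_inf (c / a) q * qpoch_inf (c / b) q / (qpoch_inf c q * qpoch_inf w q)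
     * (qpoch a q k * qpoch b q k * qpoch (1 / q ^ m) q k
         / (qpoch q q k * qpoch (a * b * q / c) q k * qpoch d q k) * q ^ k))"
proof -
  have "w \<noteq> 0" and abq: "a * b * q / c = q / w"
    using assms(4-6) by (simp_all add: w_def)
  have "norm w / norm q ^ k \<le> norm w / norm q ^ m"
    using q \<open>k \<le> m\<close> by (intro divide_left_mono power_decreasing) auto
  then have "norm (w / q ^ k) < 1"
    using \<open>norm (w / q ^ m) < 1\<close> by (simp add: norm_divide norm_power)
  moreover have nonzero: "qpoch (w / q ^ k) q k \<noteq> 0"
    using qpoch_div_q_power_reverse[OF q(2) \<open>w \<noteq> 0\<close>, of k] assms(10) q(2) by (auto simp: abq)
  moreover have "(w / q ^ m) ^ k * qfalling q m k
      = qpoch (1 / q ^ m) q k * q ^ k * qpoch (w / q ^ k) q k / qpoch (q / w) q k"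
    using qfalling_qpoch_reflect[OF q(2) \<open>w \<noteq> 0\<close>, of m k] assms(10)[unfolded abq]
    by (simp add: field_simps)
  ultimately show ?thesis
    using sums_mult[OF
        gauss_column_sums[OF q assms(4,5) c assms(8)[unfolded w_def] nonzero[unfolded w_def]],
        of "(w / q ^ m) ^ k * qfalling q m k / qpoch d q k"]
    by (simp add: abq w_def field_simps)
qed

theorem lemma2p3:
  fixes a b c d q :: complex and m :: nat
  assumes "0 < norm q" "norm q < 1"
    and "a \<noteq> 0" "b \<noteq> 0" "c \<noteq> 0"
    and "\<And>k. qpoch c q k \<noteq> 0"
    and "\<And>k. qpoch d q k \<noteq> 0"
    and "\<And>k. k \<le> m \<Longrightarrow> qpoch (a * b * q / c) q k \<noteq> 0"
    and "qpoch_inf c q \<noteq> 0" "qpoch_inf (c / (a * b)) q \<noteq> 0"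
    and "norm (c * q powi (- int m) / (a * b)) < 1"
  shows "qphi [a, b, d * q ^ m] [c, d] q (c * q powi (- int m) / (a * b)) =
    qpoch_inf (c / a) q * qpoch_inf (c / b) q / (qpoch_inf c q * qpoch_inf (c / (a * b)) q)
    * qphi [a, b, q powi (- int m)] [a * b * q / c, d] q q"
proof -
  define w where "w = c / (a * b)"
  define G where "G = qpoch_inf (c / a) q * qpoch_inf (c / b) q / (qpoch_inf c q * qpoch_inf w q)"
  have q: "norm q < 1" "q \<noteq> 0"
    using assms(1,2) by auto
  have powi: "q powi (- int m) = 1 / q ^ m" and z: "c * q powi (- int m) / (a * b) = w / q ^ m"
    by (simp_all add: power_int_minus divide_inverse w_def)
  note column = phi32_column_sums[OF q assms(3-6,10) _ assms(8) assms(11)[unfolded z w_def],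
    folded w_def, folded G_def]
  have "qphi [a, b, d * q ^ m] [c, d] q (w / q ^ m)
      = (\<Sum>n. \<Sum>k\<le>m. (w / q ^ m) ^ k * qfalling q m k / qpoch d q k * gauss_column a b c q k n)"
    unfolding qphi_def
        phi32_term_expand[OF q assms(7), where a=a and b=b and c=c, folded w_def, symmetric]
    by (simp add: mult.assoc)
  also have "\<dots>
      = (\<Sum>k\<le>m. \<Sum>n. (w / q ^ m) ^ k * qfalling q m k / qpoch d q k * gauss_column a b c q k n)"
    by (rule suminf_sum) (use column in \<open>blast intro: sums_summable\<close>)
  also have "\<dots> = G * qphi [a, b, 1 / q ^ m] [a * b * q / c, d] q q"
    unfolding qphi_terminating[OF q(2)] sum_distrib_left
    by (intro sum.cong refl sums_unique[symmetric] column) auto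
  finally show ?thesis
    unfolding z unfolding powi G_def w_def .
qed

end
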